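(* For any choice function $\tau$ and any minimal choice of horizontal edges $\mathcal H=\mathcal H^{\min}$, the homomorphism $\varphi_{\tau,\mathcal H}: C(X,\mathbb{Z})\cong K_0(C(X))\to\mathbb{Z}$ is non-trivial. In particular, the $K$-homology class of a Pearson–Bellissard spectral triple is never trivial.
   Context: Let $(X,d)$ be an infinite compact ultrametric space, identified with the boundary $\partial\mathcal{T}$ (infinite paths from the root) of its Michon tree $\mathcal{T}=(\mathcal{T}^{(0)},\mathcal{T}^{(1)})$, whose level-$n$ vertices are the balls of the $n$-th radius in the image of $d$. For a vertex $v$ let $\mathcal{T}^{(0)}(v)$ be its set of immediate successors and $\chi_v$ the indicator function of the set of infinite paths through $v$. A minimal choice of horizontal edges $\mathcal H^{\min}$ consists, for each branching vertex $v$, of two distinct vertices of $\mathcal{T}^{(0)}(v)$ linked by two edges (one in each direction). A choice function $\tau:\mathcal{T}^{(0)}\to\partial\mathcal{T}$ satisfies: $\tau(v)$ passes through $v$, and if $w\prec v$ then $\tau(w)=\tau(v)$ iff $\tau(w)$ passes through $v$. Fix an orientation $\mathcal H=\mathcal H^+\cup\mathcal H^-$. The spectral triple on $\ell^2(\mathcal H)=\ell^2(\mathcal H^+)\oplus\ell^2(\mathcal H^-)$ with representation $\pi_\tau(f)\psi(h)=f(\tau(s(h)))\psi(h)$ and Dirac operator $D\psi(h)=\delta(h)^{-1}\psi(h^{\mathrm{op}})$ (this is the Pearson–Bellissard triple when $\mathcal H=\mathcal H^{\min}$) gives the even Fredholm module with $F=\mathrm{sign}(D)$, whose off-diagonal part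 $T:\ell^2(\mathcal H^+)\to\ell^2(\mathcal H^-)$ is $T1_h=1_{h^{\mathrm{op}}}$. Its Connes pairing with $K_0$ is $\varphi_{\tau,\mathcal H}(p)=\mathrm{Ind}(\pi_-(p)T\pi_+(p))$, explicitly $\varphi_{\tau,\mathcal H}(\chi_v)=\sum_{h\in\mathcal H^+}\big(\chi_v(\tau(s(h)))-\chi_v(\tau(r(h)))\big)$. *)

theory Defs
  imports "HOL-Analysis.Analysis"
begin

definition ultrametric :: "'a::metric_space set \<Rightarrow> bool" where
  "ultrametric X \<longleftrightarrow> (\<forall>x\<in>X. \<forall>y\<in>X. \<forall>z\<in>X. dist x z \<le> max (dist x y) (dist y z))"

definition dvals :: "'a::metric_space set \<Rightarrow> real set" where
  "dvals X = {dist x y | x y. x \<in> X \<and> y \<in> X}"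

text \<open>The n-th radius: positive values of d listed in decreasing order (n = 0 is the diameter).\<close>
definition rad :: "'a::metric_space set \<Rightarrow> nat \<Rightarrow> real" where
  "rad X n = (THE r. r \<in> dvals X \<and> 0 < r \<and> finite {s \<in> dvals X. r < s}
                     \<and> card {s \<in> dvals X. r < s} = n)"

definition lvl :: "'a::metric_space set \<Rightarrow> nat \<Rightarrow> 'a set set" where
  "lvl X n = {{y \<in> X. dist x y \<le> rad X n} | x. x \<in> X}"

definition mvert :: "'a::metric_space set \<Rightarrow> (nat \<times> 'a set) set" where
  "mvert X = {(n, B). B \<in> lvl X n}"

definition mchildren :: "'a::metric_space set \<Rightarrow> nat \<times> 'a set \<Rightarrow> (nat \<times> 'a set) set" where
  "mchildren X v = {(Suc (fst v), B') | B'. B' \<in> lvl X (Suc (fst v)) \<and> B' \<subseteq> snd v}"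

text \<open>Boundary of the tree: infinite paths from the root.\<close>
definition mpaths :: "'a::metric_space set \<Rightarrow> (nat \<Rightarrow> 'a set) set" where
  "mpaths X = {p. \<forall>n. p n \<in> lvl X n \<and> p (Suc n) \<subseteq> p n}"

definition passes :: "(nat \<Rightarrow> 'a set) \<Rightarrow> nat \<times> 'a set \<Rightarrow> bool" where
  "passes p v \<longleftrightarrow> p (fst v) = snd v"

definition precedes :: "nat \<times> 'a set \<Rightarrow> nat \<times> 'a set \<Rightarrow> bool" where
  "precedes w v \<longleftrightarrow> fst w < fst v \<and> snd v \<subseteq> snd w"

definition choice_fun :: "'a::metric_space set \<Rightarrow> (nat \<times> 'a set \<Rightarrow> (nat \<Rightarrow> 'a set)) \<Rightarrow> bool" where
  "choice_fun X \<tau> \<longleftrightarrow>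
     (\<forall>v\<in>mvert X. \<tau> v \<in> mpaths X \<and> passes (\<tau> v) v) \<and>
     (\<forall>v\<in>mvert X. \<forall>w\<in>mvert X. precedes w v \<longrightarrow> (\<tau> w = \<tau> v \<longleftrightarrow> passes (\<tau> w) v))"

definition branching :: "'a::metric_space set \<Rightarrow> nat \<times> 'a set \<Rightarrow> bool" where
  "branching X v \<longleftrightarrow> v \<in> mvert X \<and> (\<exists>a b. a \<noteq> b \<and> a \<in> mchildren X v \<and> b \<in> mchildren X v)"

text \<open>Minimal choice of horizontal edges; an edge h is a pair (s h, r h), h^op = swap h.\<close>
definition min_horizontal :: "'a::metric_space set \<Rightarrow> ((nat \<times> 'a set) \<times> (nat \<times> 'a set)) set \<Rightarrow> bool" where
  "min_horizontal X H \<longleftrightarrow> (\<exists>sel.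
      (\<forall>v. branching X v \<longrightarrow> fst (sel v) \<noteq> snd (sel v) \<and>
            fst (sel v) \<in> mchildren X v \<and> snd (sel v) \<in> mchildren X v) \<and>
      H = (\<Union>v\<in>{v. branching X v}. {sel v, prod.swap (sel v)}))"

definition orientation :: "('v \<times> 'v) set \<Rightarrow> ('v \<times> 'v) set \<Rightarrow> bool" where
  "orientation H Hp \<longleftrightarrow> Hp \<subseteq> H \<and> (\<forall>h\<in>H. (h \<in> Hp) \<noteq> (prod.swap h \<in> Hp))"

text \<open>C(X,Z) = C(boundary,Z): locally constant integer functions on the path space.\<close>
definition contZ :: "'a::metric_space set \<Rightarrow> ((nat \<Rightarrow> 'a set) \<Rightarrow> int) \<Rightarrow> bool" where
  "contZ X f \<longleftrightarrow> (\<forall>p\<in>mpaths X. \<exists>n. \<forall>q\<in>mpaths X. q n = p n \<longrightarrow> f q = f p)"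

text \<open>phi(f) = sum over H+ of f(tau(s h)) - f(tau(r h)); for f in C(X,Z) only finitely many
  terms are non-zero, and the sum is taken over those.\<close>
definition phi :: "(nat \<times> 'a set \<Rightarrow> (nat \<Rightarrow> 'a set)) \<Rightarrow> ((nat \<times> 'a set) \<times> (nat \<times> 'a set)) set
                   \<Rightarrow> ((nat \<Rightarrow> 'a set) \<Rightarrow> int) \<Rightarrow> int" where
  "phi \<tau> Hp f = (\<Sum>h \<in> {h \<in> Hp. f (\<tau> (fst h)) \<noteq> f (\<tau> (snd h))}. f (\<tau> (fst h)) - f (\<tau> (snd h)))"

end

theory Submission
  imports Defs
begin

text \<open>Let v be a branching vertex of minimal level, (a, b) its chosen pair of children and f the
  indicator function of the paths through a. Then f(\<tau>(a)) = 1 and f(\<tau>(b)) = 0. For the chosen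
  pair (c, d) of any other branching vertex u, f takes the same value at \<tau>(c) and \<tau>(d): if u is at
  least as deep as a, both paths pass through u and therefore agree at the level of a; otherwise
  u is on the level of v, hence disjoint from v, and neither path passes through a. So exactly one
  edge of the orientation contributes to \<phi>(f), which is \<plusminus>1.\<close>

lemma ultrametricD:
  "ultrametric X \<Longrightarrow> x \<in> X \<Longrightarrow> y \<in> X \<Longrightarrow> z \<in> X \<Longrightarrow> dist x z \<le> max (dist x y) (dist y z)"
  unfolding ultrametric_def by blast

lemma ultrametric_closed_ball_eq:
  assumes U: "ultrametric X" and "x \<in> X" "x' \<in> X" "dist x x' \<le> r"
  shows "{y\<in>X. dist x y \<le> r} = {y\<in>X. dist x' y \<le> r}"
proof -
  have "dist x' y \<le> r" if "y \<in> X" "dist x y \<le> r" for y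
    using ultrametricD[OF U \<open>x' \<in> X\<close> \<open>x \<in> X\<close> that(1)] assms(4) that(2)
    by (simp add: dist_commute)
  moreover have "dist x y \<le> r" if "y \<in> X" "dist x' y \<le> r" for y
    using ultrametricD[OF U \<open>x \<in> X\<close> \<open>x' \<in> X\<close> that(1)] assms(4) that(2) by simp
  ultimately show ?thesis by blast
qed

lemma closed_ball_lvl: "c \<in> X \<Longrightarrow> {z\<in>X. dist c z \<le> rad X n} \<in> lvl X n"
  unfolding lvl_def by blast

lemma lvl_eq_if_common_point:
  assumes U: "ultrametric X" and "B \<in> lvl X n" "B' \<in> lvl X n" "z \<in> B" "z \<in> B'"
  shows "B = B'"
proof -
  have centred: "B = {y\<in>X. dist z y \<le> rad X n}" if "B \<in> lvl X n" "z \<in> B" for B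
  proof -
    obtain x where "x \<in> X" "B = {y\<in>X. dist x y \<le> rad X n}"
      using \<open>B \<in> lvl X n\<close> unfolding lvl_def by blast
    then show ?thesis using ultrametric_closed_ball_eq[OF U, of x z "rad X n"] \<open>z \<in> B\<close> by simp
  qed
  show ?thesis using centred[OF assms(2,4)] centred[OF assms(3,5)] by simp
qed

lemma lvl_subset_if_empty_mem: "{} \<in> lvl X n \<Longrightarrow> lvl X n \<subseteq> {{}}"
  unfolding lvl_def by auto (metis dist_self order.trans zero_le_dist)

lemma mpaths_lvl: "p \<in> mpaths X \<Longrightarrow> p n \<in> lvl X n"
  unfolding mpaths_def by blast

lemma mpaths_antimono: "p \<in> mpaths X \<Longrightarrow> m \<le> n \<Longrightarrow> p n \<subseteq> p m"
  unfolding mpaths_def by (simp add: lift_Suc_antimono_le)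

lemma mpaths_agree_above:
  assumes U: "ultrametric X" and p: "p \<in> mpaths X" and q: "q \<in> mpaths X"
    and "p n = q n" "p n \<noteq> {}" "m \<le> n"
  shows "p m = q m"
proof -
  obtain z where "z \<in> p n" using \<open>p n \<noteq> {}\<close> by blast
  then have "z \<in> p m" "z \<in> q m"
    using mpaths_antimono[OF p \<open>m \<le> n\<close>] mpaths_antimono[OF q \<open>m \<le> n\<close>] \<open>p n = q n\<close> by auto
  then show ?thesis using lvl_eq_if_common_point[OF U mpaths_lvl[OF p] mpaths_lvl[OF q]] by blast
qed

lemma mchildrenD:
  "c \<in> mchildren X u \<Longrightarrow> fst c = Suc (fst u) \<and> snd c \<in> lvl X (Suc (fst u)) \<and> snd c \<subseteq> snd u"
  unfolding mchildren_def by auto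

lemma mchildren_mvert: "c \<in> mchildren X u \<Longrightarrow> c \<in> mvert X"
  unfolding mchildren_def mvert_def by auto

lemma branching_lvl: "branching X v \<Longrightarrow> snd v \<in> lvl X (fst v)"
  unfolding branching_def mvert_def by auto

lemma branchingI:
  "v \<in> mvert X \<Longrightarrow> a \<noteq> b \<Longrightarrow> a \<in> mchildren X v \<Longrightarrow> b \<in> mchildren X v \<Longrightarrow> branching X v"
  unfolding branching_def by blast

lemma branching_mchildren_nonempty:
  assumes "branching X u" "c \<in> mchildren X u"
  shows "snd c \<noteq> {}"
proof
  assume "snd c = {}"
  obtain a b where "a \<noteq> b" "a \<in> mchildren X u" "b \<in> mchildren X u"
    using assms(1) unfolding branching_def by blast
  \<comment> \<open>an empty ball forces a negative radius, and then the whole level is the single vertex {}\<close>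
  moreover have "lvl X (Suc (fst u)) \<subseteq> {{}}"
    using lvl_subset_if_empty_mem mchildrenD[OF assms(2)] \<open>snd c = {}\<close> by metis
  ultimately show False using mchildrenD by (metis prod_eqI singletonD subsetD)
qed

lemma passes_branching_if_passes_mchild:
  assumes U: "ultrametric X" and u: "branching X u" and c: "c \<in> mchildren X u"
    and p: "p \<in> mpaths X" "passes p c"
  shows "passes p u"
proof -
  obtain z where z: "z \<in> snd c" using branching_mchildren_nonempty[OF u c] by blast
  have "p (Suc (fst u)) = snd c" using p(2) mchildrenD[OF c] unfolding passes_def by simp
  then have "z \<in> p (fst u)" using mpaths_antimono[OF p(1), of "fst u" "Suc (fst u)"] z by auto
  moreover have "z \<in> snd u" using mchildrenD[OF c] z by auto
  ultimately show ?thesis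
    using lvl_eq_if_common_point[OF U mpaths_lvl[OF p(1)] branching_lvl[OF u]]
    unfolding passes_def by blast
qed

lemma finite_dvals_above:
  assumes K: "compact X" and U: "ultrametric X" and "0 < r"
  shows "finite {s\<in>dvals X. r < s}"
proof -
  obtain C where C: "C \<subseteq> X" "finite C" "X \<subseteq> (\<Union>c\<in>C. ball c r)"
    using compactE_image[OF K, of X "\<lambda>c. ball c r"] \<open>0 < r\<close> by force
  have "{s\<in>dvals X. r < s} \<subseteq> (\<lambda>(c, c'). dist c c') ` (C \<times> C)"
  proof
    fix s assume "s \<in> {s\<in>dvals X. r < s}"
    then obtain x y where xy: "x \<in> X" "y \<in> X" "s = dist x y" "r < s" unfolding dvals_def by auto
    obtain c c' where c: "c \<in> C" "dist c x < r" and c': "c' \<in> C" "dist c' y < r"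
      using subsetD[OF C(3) xy(1)] subsetD[OF C(3) xy(2)] by (auto simp: dist_commute)
    have cX: "c \<in> X" "c' \<in> X" using C c c' by auto
    \<comment> \<open>ultrametric triangles are isosceles: moving both endpoints by less than r < dist x y
      does not change the distance\<close>
    have "dist x y \<le> max (dist x c) (dist c y)" "dist c y \<le> max (dist c c') (dist c' y)"
      "dist c c' \<le> max (dist c x) (dist x c')" "dist x c' \<le> max (dist x y) (dist y c')"
      using ultrametricD[OF U] xy cX by blast+
    then have "s = dist c c'" using xy(3,4) c(2) c'(2) by (simp add: dist_commute split: if_splits)
    then show "s \<in> (\<lambda>(c, c'). dist c c') ` (C \<times> C)" using c c' by blast
  qed
  then show ?thesis using C(2) finite_subset by blast
qed

lemma rad_card_dvals_above:
  assumes K: "compact X" and U: "ultrametric X" and r: "r \<in> dvals X" "0 < r"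
  shows "rad X (card {s\<in>dvals X. r < s}) = r"
  unfolding rad_def
proof (rule the_equality)
  have fin: "finite {s\<in>dvals X. r < s}" using finite_dvals_above[OF K U r(2)] .
  then show "r \<in> dvals X \<and> 0 < r \<and> finite {s\<in>dvals X. r < s}
    \<and> card {s\<in>dvals X. r < s} = card {s\<in>dvals X. r < s}" using r by blast
  fix r' assume r': "r' \<in> dvals X \<and> 0 < r' \<and> finite {s\<in>dvals X. r' < s}
    \<and> card {s\<in>dvals X. r' < s} = card {s\<in>dvals X. r < s}"
  have card_less: "card {s\<in>dvals X. t' < s} < card {s\<in>dvals X. t < s}"
    if "t < t'" "t' \<in> dvals X" "finite {s\<in>dvals X. t < s}" for t t'
    using that by (intro psubset_card_mono) auto
  show "r' = r"
  proof (rule ccontr)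
    assume "r' \<noteq> r"
    then consider "r < r'" | "r' < r" by linarith
    then show False
    proof cases
      case 1
      then show False using card_less[of r r'] r' fin by simp
    next
      case 2
      then show False using card_less[of r' r] r r' by simp
    qed
  qed
qed

lemma dvals_next_below:
  assumes K: "compact X" and U: "ultrametric X"
    and "r0 \<in> dvals X" "s \<in> dvals X" "0 < s" "s < r0"
  obtains r where "r \<in> dvals X" "0 < r" "r < r0"
    "{t\<in>dvals X. r < t} = insert r0 {t\<in>dvals X. r0 < t}"
proof -
  define T where "T = {t\<in>dvals X. s \<le> t \<and> t < r0}"
  have "T \<subseteq> {t\<in>dvals X. s/2 < t}" unfolding T_def using assms by auto
  then have "finite T" using finite_dvals_above[OF K U, of "s/2"] \<open>0 < s\<close> finite_subset by auto
  moreover have "s \<in> T" unfolding T_def using assms by auto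
  ultimately have "Max T \<in> T" "\<And>t. t \<in> T \<Longrightarrow> t \<le> Max T" by (auto intro: Max_in)
  then show ?thesis
    using that[of "Max T"] assms unfolding T_def by (fastforce simp: not_less)
qed

lemma branching_if_dist_between_radii:
  assumes U: "ultrametric X" and "x \<in> X" "y \<in> X"
    and "0 \<le> rad X (Suc k)" "rad X (Suc k) < dist x y" "dist x y \<le> rad X k"
  shows "branching X (k, {z\<in>X. dist x z \<le> rad X k})"
proof -
  let ?ball = "\<lambda>c r. {z\<in>X. dist c z \<le> r}"
  define v where "v = (k, ?ball x (rad X k))"
  have child: "(Suc k, ?ball c (rad X (Suc k))) \<in> mchildren X v"
    if "c \<in> X" "?ball c (rad X (Suc k)) \<subseteq> ?ball x (rad X k)" for c
    using closed_ball_lvl[OF that(1)] that(2) unfolding mchildren_def v_def by simp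
  have "?ball y (rad X (Suc k)) \<subseteq> ?ball x (rad X k)"
  proof
    fix z assume "z \<in> ?ball y (rad X (Suc k))"
    then show "z \<in> ?ball x (rad X k)"
      using ultrametricD[OF U \<open>x \<in> X\<close> \<open>y \<in> X\<close>, of z] assms(5,6) by auto
  qed
  then have child_y: "(Suc k, ?ball y (rad X (Suc k))) \<in> mchildren X v"
    by (rule child[OF assms(3)])
  have child_x: "(Suc k, ?ball x (rad X (Suc k))) \<in> mchildren X v"
    by (rule child[OF assms(2)]) (use assms(5,6) in auto)
  have children_ne: "(Suc k, ?ball x (rad X (Suc k))) \<noteq> (Suc k, ?ball y (rad X (Suc k)))"
  proof
    assume "(Suc k, ?ball x (rad X (Suc k))) = (Suc k, ?ball y (rad X (Suc k)))"
    then have eq: "?ball x (rad X (Suc k)) = ?ball y (rad X (Suc k))" by simp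
    have "x \<in> ?ball x (rad X (Suc k))" using assms(2,4) by simp
    then have "dist y x \<le> rad X (Suc k)" unfolding eq by simp
    then show False using assms(5) by (simp add: dist_commute)
  qed
  have v: "v \<in> mvert X"
    using closed_ball_lvl[OF assms(2)] unfolding mvert_def v_def by simp
  show ?thesis using branchingI[OF v children_ne child_x child_y] by (simp add: v_def)
qed

lemma branching_exists:
  assumes K: "compact X" and I: "infinite X" and U: "ultrametric X"
  obtains v where "branching X v"
proof -
  \<comment> \<open>Near a limit point x0 there are distances below r0 = dist x1 x0, hence a largest one r;
    the ball of radius r0 about x1 then has the distinct subballs of radius r about x1 and x0.\<close>
  obtain x0 where x0: "x0 \<in> X" "x0 islimpt X"
    using Heine_Borel_imp_Bolzano_Weierstrass[OF K I] by blast
  obtain x1 where x1: "x1 \<in> X" "x1 \<noteq> x0"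
    using x0(2) unfolding islimpt_approachable by (meson zero_less_one)
  obtain x2 where x2: "x2 \<in> X" "x2 \<noteq> x0" "dist x2 x0 < dist x1 x0"
    using x0(2) x1 unfolding islimpt_approachable by (metis zero_less_dist_iff)
  have dvals: "dist x1 x0 \<in> dvals X" "dist x2 x0 \<in> dvals X"
    using x0 x1 x2 unfolding dvals_def by auto
  obtain r where r: "r \<in> dvals X" "0 < r" "r < dist x1 x0"
    and above: "{t\<in>dvals X. r < t} = insert (dist x1 x0) {t\<in>dvals X. dist x1 x0 < t}"
    using dvals_next_below[OF K U dvals] x2 by auto
  define k where "k = card {t\<in>dvals X. dist x1 x0 < t}"
  have "rad X k = dist x1 x0"
    unfolding k_def using rad_card_dvals_above[OF K U dvals(1)] x1 by simp
  moreover have "rad X (Suc k) = r"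
    using rad_card_dvals_above[OF K U r(1,2)] finite_dvals_above[OF K U, of "dist x1 x0"] x1
    unfolding above k_def by simp
  ultimately show ?thesis
    using that branching_if_dist_between_radii[OF U x1(1) x0(1), of k] r by simp
qed

lemma branching_least_level:
  assumes "branching X v0"
  obtains v where "branching X v" "\<And>u. branching X u \<Longrightarrow> fst v \<le> fst u"
  using ex_has_least_nat[of "branching X" v0 fst] assms by blast

lemma min_horizontal_least_branching_edge:
  assumes "compact X" "infinite X" "ultrametric X" "min_horizontal X H"
  obtains v a b where "branching X v" "\<And>u. branching X u \<Longrightarrow> fst v \<le> fst u"
    "a \<in> mchildren X v" "b \<in> mchildren X v" "a \<noteq> b" "(a, b) \<in> H"
    "\<And>h. h \<in> H \<Longrightarrow> h \<noteq> (a, b) \<Longrightarrow> h \<noteq> (b, a) \<Longrightarrow>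
      \<exists>u. branching X u \<and> u \<noteq> v \<and> fst h \<in> mchildren X u \<and> snd h \<in> mchildren X u"
proof -
  obtain sel where sel: "\<And>v. branching X v \<Longrightarrow> fst (sel v) \<noteq> snd (sel v) \<and>
      fst (sel v) \<in> mchildren X v \<and> snd (sel v) \<in> mchildren X v"
    and H: "H = (\<Union>v\<in>{v. branching X v}. {sel v, prod.swap (sel v)})"
    using assms(4) unfolding min_horizontal_def by blast
  obtain v where v: "branching X v" and least: "\<And>u. branching X u \<Longrightarrow> fst v \<le> fst u"
    using branching_exists[OF assms(1-3)] branching_least_level by metis
  obtain a b where ab: "sel v = (a, b)" by (cases "sel v")
  have "a \<in> mchildren X v" "b \<in> mchildren X v" "a \<noteq> b" using sel[OF v] ab by auto
  moreover have "(a, b) \<in> H" unfolding H by (rule UN_I[of v]) (simp_all add: v ab)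
  moreover have "\<exists>u. branching X u \<and> u \<noteq> v \<and> fst h \<in> mchildren X u \<and> snd h \<in> mchildren X u"
    if edge: "h \<in> H" "h \<noteq> (a, b)" "h \<noteq> (b, a)" for h
  proof -
    obtain u where u: "branching X u" and h: "h = sel u \<or> h = prod.swap (sel u)"
      using \<open>h \<in> H\<close> unfolding H by blast
    have "u \<noteq> v" using h edge ab by auto
    moreover have "fst h \<in> mchildren X u" "snd h \<in> mchildren X u" using sel[OF u] h by auto
    ultimately show ?thesis using u by blast
  qed
  ultimately show ?thesis using that[OF v least] by blast
qed

lemma choice_fun_mchildD:
  assumes "choice_fun X \<tau>" "c \<in> mchildren X u"
  shows "\<tau> c \<in> mpaths X" "passes (\<tau> c) c"
  using assms mchildren_mvert unfolding choice_fun_def by blast+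

lemma mpaths_through_mchildren_agree_above:
  assumes U: "ultrametric X" and u: "branching X u"
    and c: "c \<in> mchildren X u" and d: "d \<in> mchildren X u"
    and p: "p \<in> mpaths X" "passes p c" and q: "q \<in> mpaths X" "passes q d" and "m \<le> fst u"
  shows "p m = q m"
proof (rule mpaths_agree_above[OF U p(1) q(1) _ _ \<open>m \<le> fst u\<close>])
  have "passes p u" "passes q u"
    using passes_branching_if_passes_mchild[OF U u] c d p q by blast+
  then show "p (fst u) = q (fst u)" unfolding passes_def by simp
  show "p (fst u) \<noteq> {}"
    using \<open>passes p u\<close> branching_mchildren_nonempty[OF u c] mchildrenD[OF c]
    unfolding passes_def by auto
qed

lemma mpath_through_mchild_not_passes_cousin:
  assumes U: "ultrametric X" and u: "branching X u" and v: "branching X v" "fst u = fst v" "u \<noteq> v"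
    and c: "c \<in> mchildren X u" and a: "a \<in> mchildren X v"
    and p: "p \<in> mpaths X" "passes p c"
  shows "\<not> passes p a"
proof
  assume "passes p a"
  obtain z where z: "z \<in> snd a" using branching_mchildren_nonempty[OF v(1) a] by blast
  have "passes p u" using passes_branching_if_passes_mchild[OF U u c p] .
  then have "z \<in> snd u"
    using \<open>passes p a\<close> mpaths_antimono[OF p(1), of "fst u" "fst a"] mchildrenD[OF a] v(2) z
    unfolding passes_def by auto
  moreover have "z \<in> snd v" using z mchildrenD[OF a] by auto
  ultimately have "snd u = snd v"
    using lvl_eq_if_common_point[OF U branching_lvl[OF u]] branching_lvl[OF v(1)] v(2) by simp
  then show False using v(2,3) by (simp add: prod_eq_iff)
qed

lemma choice_fun_passes_least_branching_mchild:
  assumes U: "ultrametric X" and ch: "choice_fun X \<tau>"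
    and v: "branching X v" "\<And>u. branching X u \<Longrightarrow> fst v \<le> fst u" and a: "a \<in> mchildren X v"
    and u: "branching X u" "u \<noteq> v" and c: "c \<in> mchildren X u" and d: "d \<in> mchildren X u"
  shows "passes (\<tau> c) a \<longleftrightarrow> passes (\<tau> d) a"
proof (cases "fst a \<le> fst u")
  case True
  then show ?thesis
    using mpaths_through_mchildren_agree_above[OF U u(1) c d] choice_fun_mchildD[OF ch] c d
    unfolding passes_def by metis
next
  case False
  then have "fst u = fst v" using v(2)[OF u(1)] mchildrenD[OF a] by simp
  then show ?thesis
    using mpath_through_mchild_not_passes_cousin[OF U u(1) v(1) _ u(2) _ a] choice_fun_mchildD[OF ch] c d
    by blast
qed

lemma phi_ne_zero_if_single_separating_edge:
  assumes "orientation H Hp" "(a, b) \<in> H" "f (\<tau> a) \<noteq> f (\<tau> b)"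
    and "\<And>h. h \<in> H \<Longrightarrow> h \<noteq> (a, b) \<Longrightarrow> h \<noteq> (b, a) \<Longrightarrow> f (\<tau> (fst h)) = f (\<tau> (snd h))"
  shows "phi \<tau> Hp f \<noteq> 0"
proof -
  have "Hp \<subseteq> H" and xor: "((a, b) \<in> Hp) \<noteq> ((b, a) \<in> Hp)"
    using assms(1,2) unfolding orientation_def by (blast, force)
  have separating: "{h \<in> Hp. f (\<tau> (fst h)) \<noteq> f (\<tau> (snd h))} = Hp \<inter> {(a, b), (b, a)}"
  proof (intro set_eqI iffI)
    fix h assume "h \<in> {h \<in> Hp. f (\<tau> (fst h)) \<noteq> f (\<tau> (snd h))}"
    then show "h \<in> Hp \<inter> {(a, b), (b, a)}" using \<open>Hp \<subseteq> H\<close> assms(4) by blast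
  next
    fix h assume "h \<in> Hp \<inter> {(a, b), (b, a)}"
    then show "h \<in> {h \<in> Hp. f (\<tau> (fst h)) \<noteq> f (\<tau> (snd h))}" using assms(3) by auto
  qed
  from xor have "Hp \<inter> {(a, b), (b, a)} = {(a, b)} \<or> Hp \<inter> {(a, b), (b, a)} = {(b, a)}" by auto
  then show ?thesis unfolding phi_def separating using assms(3) by auto
qed

theorem mainTheorem3:
  fixes X :: "'a::metric_space set"
    and \<tau> :: "nat \<times> 'a set \<Rightarrow> (nat \<Rightarrow> 'a set)"
    and H Hp :: "((nat \<times> 'a set) \<times> (nat \<times> 'a set)) set"
  assumes "compact X" and "infinite X" and "ultrametric X"
    and "choice_fun X \<tau>"
    and "min_horizontal X H"
    and "orientation H Hp"
  shows "\<exists>f. contZ X f \<and> phi \<tau> Hp f \<noteq> 0"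
proof -
  note U = assms(3) and ch = assms(4)
  obtain v a b where v: "branching X v" and least: "\<And>u. branching X u \<Longrightarrow> fst v \<le> fst u"
    and a: "a \<in> mchildren X v" and b: "b \<in> mchildren X v" and "a \<noteq> b" and "(a, b) \<in> H"
    and other_edge: "\<And>h. h \<in> H \<Longrightarrow> h \<noteq> (a, b) \<Longrightarrow> h \<noteq> (b, a) \<Longrightarrow>
      \<exists>u. branching X u \<and> u \<noteq> v \<and> fst h \<in> mchildren X u \<and> snd h \<in> mchildren X u"
    using min_horizontal_least_branching_edge[OF assms(1-3,5)] by blast
  define f :: "(nat \<Rightarrow> 'a set) \<Rightarrow> int" where "f p = of_bool (passes p a)" for p
  have "contZ X f" unfolding contZ_def f_def passes_def by (intro ballI exI[of _ "fst a"]) simp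
  moreover have "\<not> passes (\<tau> b) a"
    using choice_fun_mchildD(2)[OF ch b] mchildrenD[OF a] mchildrenD[OF b] \<open>a \<noteq> b\<close>
    unfolding passes_def by (auto simp: prod_eq_iff)
  then have "f (\<tau> a) \<noteq> f (\<tau> b)" using choice_fun_mchildD(2)[OF ch a] unfolding f_def by simp
  moreover have "f (\<tau> (fst h)) = f (\<tau> (snd h))"
    if h: "h \<in> H" "h \<noteq> (a, b)" "h \<noteq> (b, a)" for h
  proof -
    obtain u where "branching X u" "u \<noteq> v" "fst h \<in> mchildren X u" "snd h \<in> mchildren X u"
      using other_edge[OF h] by blast
    then have "passes (\<tau> (fst h)) a \<longleftrightarrow> passes (\<tau> (snd h)) a"
      using choice_fun_passes_least_branching_mchild[OF U ch v least a] by blast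
    then show ?thesis unfolding f_def by simp
  qed
  ultimately show ?thesis
    using phi_ne_zero_if_single_separating_edge[OF assms(6) \<open>(a, b) \<in> H\<close>] by blast
qed

end
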